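(* There exists an infinite strictly increasing sequence $\langle e_n : n\in\omega\rangle$ of natural numbers such that $W_{e_n}=\{e_m : m>n\}$ for every $n\in\omega$, and such that the sequence $\langle e_n:n\in\omega\rangle$ is not computable.
   Context: $\omega$ denotes the set of natural numbers $\{0,1,2,\dots\}$. $\langle \psi_e : e\in\omega\rangle$ is a standard (acceptable, in the sense of Rogers) computable numbering of all partial computable functions from $\omega$ to $\omega$, and $W_e$ denotes the domain of $\psi_e$, so $\langle W_e:e\in\omega\rangle$ is a uniform listing of all computably enumerable subsets of $\omega$. *)

theory Defs
  imports Main "HOL-Library.Nat_Bijection"
begin

text \<open>Cn n f gs: composition of f with gs, all gs of arity n;
  Pr n f g: primitive recursion (arity n+1, recursion on the first argument);
  Mn n f: unbounded minimisation (arity n, search over the first argument of f).\<close>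

datatype recf = Z | S | Id nat nat | Cn nat recf "recf list" | Pr nat recf recf | Mn nat recf

inductive eval :: "recf \<Rightarrow> nat list \<Rightarrow> nat \<Rightarrow> bool" where
  eval_Z: "eval Z xs 0"
| eval_S: "eval S [x] (Suc x)"
| eval_Id: "k < n \<Longrightarrow> length xs = n \<Longrightarrow> eval (Id n k) xs (xs ! k)"
| eval_Cn: "length xs = n \<Longrightarrow> list_all2 (\<lambda>g y. eval g xs y) gs ys \<Longrightarrow> eval f ys z
    \<Longrightarrow> eval (Cn n f gs) xs z"
| eval_Pr0: "length xs = n \<Longrightarrow> eval f xs y \<Longrightarrow> eval (Pr n f g) (0 # xs) y"
| eval_PrS: "length xs = n \<Longrightarrow> eval (Pr n f g) (k # xs) y \<Longrightarrow> eval g (k # y # xs) z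
    \<Longrightarrow> eval (Pr n f g) (Suc k # xs) z"
| eval_Mn: "length xs = n \<Longrightarrow> eval f (y # xs) 0 \<Longrightarrow> (\<forall>z<y. \<exists>v. eval f (z # xs) (Suc v))
    \<Longrightarrow> eval (Mn n f) xs y"

fun enc :: "recf \<Rightarrow> nat" where
  "enc Z = prod_encode (0, 0)"
| "enc S = prod_encode (1, 0)"
| "enc (Id n k) = prod_encode (2, prod_encode (n, k))"
| "enc (Cn n f gs) = prod_encode (3, prod_encode (n, prod_encode (enc f, list_encode (map enc gs))))"
| "enc (Pr n f g) = prod_encode (4, prod_encode (n, prod_encode (enc f, enc g)))"
| "enc (Mn n f) = prod_encode (5, prod_encode (n, enc f))"

text \<open>The standard numbering: psi e x = y iff e codes a program which on input [x]
  outputs y (non-codes give the empty function).\<close>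
definition psi :: "nat \<Rightarrow> nat \<Rightarrow> nat \<Rightarrow> bool" where
  "psi e x y \<longleftrightarrow> (\<exists>f. enc f = e \<and> eval f [x] y)"

definition W :: "nat \<Rightarrow> nat set" where
  "W e = {x. \<exists>y. psi e x y}"

definition computable :: "(nat \<Rightarrow> nat) \<Rightarrow> bool" where
  "computable h \<longleftrightarrow> (\<exists>f. \<forall>n. eval f [n] (h n))"

end

theory Submission
  imports Defs "HOL-Library.Infinite_Set"
begin

(* Let K = Halt = {c. program c halts on input c}, the diagonal halting set,
   which is infinite and undecidable.  Fix the three-argument program tail_search that on
   (p, k, x) halts iff x = smn_code p j for some j \<in> K with k < j, where smn_code p j is the
   code of program p with its first two arguments fixed to p and j.  Then the indices
   tail_index k = smn_code (enc tail_search) k satisfy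
       W (tail_index k) = tail_index ` {j \<in> K. k < j},
   and tail_index is strictly increasing and computable.  If a enumerates K in increasing
   order, e n = tail_index (a n) is strictly increasing with W (e n) = {e m | m > n}; and if e
   were computable, then j \<in> K \<longleftrightarrow> (\<exists>m \<le> tail_index j. e m = tail_index j) would decide K. *)

inductive_cases evZE: "eval Z xs y"
inductive_cases evSE: "eval S xs y"
inductive_cases evIdE: "eval (Id n k) xs y"
inductive_cases evCnE: "eval (Cn n f gs) xs y"
inductive_cases evPrE: "eval (Pr n f g) xs y"
inductive_cases evMnE: "eval (Mn n f) xs y"

lemma list_all2_functional:
  "list_all2 P xs ys \<Longrightarrow> list_all2 Q xs zs \<Longrightarrow> (\<And>x y z. P x y \<Longrightarrow> Q x z \<Longrightarrow> y = z) \<Longrightarrow> ys = zs"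
proof (induction arbitrary: zs rule: list_all2_induct)
  case (Cons x xs y ys)
  then show ?case by (cases zs) auto
qed simp

lemma eval_det: "eval f xs y \<Longrightarrow> eval f xs y' \<Longrightarrow> y = y'"
proof (induction arbitrary: y' rule: eval.induct)
  case (eval_Z xs) then show ?case by (blast elim: evZE)
next
  case (eval_S x) then show ?case by (blast elim: evSE)
next
  case (eval_Id k n xs) then show ?case by (blast elim: evIdE)
next
  case (eval_Cn xs n gs ys f z)
  from eval_Cn.prems obtain ys' where ys': "list_all2 (\<lambda>g y. eval g xs y) gs ys'" "eval f ys' y'"
    by (rule evCnE)
  have "ys = ys'" using list_all2_functional[OF eval_Cn.IH(1) ys'(1)] by blast
  then show ?case using eval_Cn.IH(2) ys'(2) by simp
next
  case (eval_Pr0 xs n f y g) from eval_Pr0.prems show ?case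
    by (rule evPrE) (use eval_Pr0.IH in auto)
next
  case (eval_PrS xs n f g k y z)
  from eval_PrS.prems show ?case
  proof (rule evPrE)
    fix xs' k' y1
    assume "Suc k # xs = Suc k' # xs'" "eval (Pr n f g) (k' # xs') y1" "eval g (k' # y1 # xs') y'"
    then show ?thesis using eval_PrS.IH by auto
  qed auto
next
  case (eval_Mn xs n f y)
  from eval_Mn.prems have zero: "eval f (y' # xs) 0" and pos: "\<forall>z<y'. \<exists>v. eval f (z # xs) (Suc v)"
    by (blast elim: evMnE)+
  (* both y and y' are the least zero of f, so neither can be below the other *)
  have "\<not> y < y'"
  proof
    assume "y < y'"
    then obtain v where "eval f (y # xs) (Suc v)" using pos by blast
    then show False using eval_Mn.IH(1) by fastforce
  qed
  moreover have "\<not> y' < y"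
  proof
    assume "y' < y"
    then obtain v where "eval f (y' # xs) (Suc v)" using eval_Mn.IH(2) by blast
    then show False using eval_Mn.IH(2) zero \<open>y' < y\<close> by fastforce
  qed
  ultimately show ?case by simp
qed

lemma enc_inj: "enc f = enc g \<Longrightarrow> f = g"
proof (induction f arbitrary: g)
  case Z then show ?case by (cases g) (auto simp: prod_encode_eq)
next
  case S then show ?case by (cases g) (auto simp: prod_encode_eq)
next
  case (Id n k) then show ?case by (cases g) (auto simp: prod_encode_eq)
next
  case (Pr n f1 f2) then show ?case by (cases g) (auto simp: prod_encode_eq)
next
  case (Mn n f) then show ?case by (cases g) (auto simp: prod_encode_eq)
next
  case (Cn n f gs)
  then show ?case
  proof (cases g)
    case (Cn n' f' gs')
    with Cn.prems have "n = n'" "enc f = enc f'" "list_encode (map enc gs) = list_encode (map enc gs')"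
      by (auto simp: prod_encode_eq)
    moreover have "map enc gs = map enc gs'" using calculation(3) by (simp add: list_encode_eq)
    hence "gs = gs'" using Cn.IH(2)
    proof (induction gs arbitrary: gs')
      case Nil then show ?case by simp
    next
      case (Cons a gs) then show ?case by (cases gs') auto
    qed
    ultimately show ?thesis using Cn.IH(1) \<open>g = _\<close> by simp
  qed (auto simp: prod_encode_eq)
qed

(* recfn n h: the function h of an environment (only the values e 0, ..., e (n-1) matter)
   is total and computed by some program of arity n; recpred is the same for predicates.
   The rules collected in recfn_intros let intro-automation prove computability of
   explicitly written functions by following their syntax. *)
named_theorems recfn_intros

definition recfn :: "nat \<Rightarrow> ((nat \<Rightarrow> nat) \<Rightarrow> nat) \<Rightarrow> bool" where
  "recfn n h \<longleftrightarrow> (\<exists>F. \<forall>env. eval F (map env [0..<n]) (h env))"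

definition recpred :: "nat \<Rightarrow> ((nat \<Rightarrow> nat) \<Rightarrow> bool) \<Rightarrow> bool" where
  "recpred n P \<longleftrightarrow> recfn n (\<lambda>e. of_bool (P e))"

lemma map_upt_Suc0: "map f [0..<Suc n] = f 0 # map (\<lambda>i. f (Suc i)) [0..<n]"
  by (induction n) auto

lemma recfn_cong: "recfn n h \<Longrightarrow> (\<And>e. h e = h' e) \<Longrightarrow> recfn n h'"
proof -
  assume "recfn n h" "\<And>e. h e = h' e"
  then have "h = h'" by auto
  with \<open>recfn n h\<close> show ?thesis by simp
qed

primrec const0 :: "nat \<Rightarrow> recf" where
  "const0 0 = Z" | "const0 (Suc c) = Cn 0 S [const0 c]"

lemma eval_const0: "eval (const0 c) [] c"
  by (induction c) (auto intro!: eval.intros)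

lemma recfn_const[recfn_intros]: "recfn n (\<lambda>e. c)"
  unfolding recfn_def
  by (rule exI[of _ "Cn n (const0 c) []"]) (auto intro!: eval.intros eval_const0)

lemma recfn_proj[recfn_intros]: "k < n \<Longrightarrow> recfn n (\<lambda>e. e k)"
  unfolding recfn_def
proof (intro exI allI)
  fix env assume "k < n"
  have "eval (Id n k) (map env [0..<n]) (map env [0..<n] ! k)" by (rule eval_Id) (use \<open>k < n\<close> in auto)
  then show "eval (Id n k) (map env [0..<n]) (env k)" using \<open>k < n\<close> by simp
qed

lemma recfn_comp:
  assumes "recfn m f" "\<forall>i<m. recfn n (gs i)"
  shows "recfn n (\<lambda>env. f (\<lambda>i. gs i env))"
proof -
  obtain Ff where Ff: "\<forall>env. eval Ff (map env [0..<m]) (f env)" using assms(1) unfolding recfn_def by blast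
  have "\<forall>i<m. \<exists>G. \<forall>env. eval G (map env [0..<n]) (gs i env)" using assms(2) unfolding recfn_def by blast
  then obtain G where G: "\<forall>i<m. \<forall>env. eval (G i) (map env [0..<n]) (gs i env)" by metis
  show ?thesis unfolding recfn_def
  proof (intro exI allI)
    fix env
    have "list_all2 (\<lambda>g y. eval g (map env [0..<n]) y) (map G [0..<m]) (map (\<lambda>i. gs i env) [0..<m])"
      using G by (auto simp: list_all2_conv_all_nth)
    moreover have "eval Ff (map (\<lambda>i. gs i env) [0..<m]) (f (\<lambda>i. gs i env))" using Ff by blast
    ultimately show "eval (Cn n Ff (map G [0..<m])) (map env [0..<n]) (f (\<lambda>i. gs i env))"
      by (intro eval_Cn) auto
  qed
qed

(* Primitive recursion on the first argument of the environment, mirroring Pr: the step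
   function sees the counter k, the previous value and the parameters, in that order. *)
fun prim_rec :: "((nat \<Rightarrow> nat) \<Rightarrow> nat) \<Rightarrow> ((nat \<Rightarrow> nat) \<Rightarrow> nat) \<Rightarrow> nat \<Rightarrow> (nat \<Rightarrow> nat) \<Rightarrow> nat"
  where
  "prim_rec f g 0 env = f env"
| "prim_rec f g (Suc k) env = g (case_nat k (case_nat (prim_rec f g k env) env))"

lemma recfn_prim_rec:
  assumes "recfn n f" "recfn (Suc (Suc n)) g"
  shows "recfn (Suc n) (\<lambda>env. prim_rec f g (env 0) (\<lambda>i. env (Suc i)))"
proof -
  obtain Ff where Ff: "\<forall>env. eval Ff (map env [0..<n]) (f env)" using assms(1) unfolding recfn_def by blast
  obtain Gg where Gg: "\<forall>env. eval Gg (map env [0..<Suc (Suc n)]) (g env)" using assms(2) unfolding recfn_def by blast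
  have *: "eval (Pr n Ff Gg) (k # map e [0..<n]) (prim_rec f g k e)" for k e
  proof (induction k)
    case 0 then show ?case using Ff by (auto intro: eval_Pr0)
  next
    case (Suc k)
    have "eval Gg (map (case_nat k (case_nat (prim_rec f g k e) e)) [0..<Suc (Suc n)]) (prim_rec f g (Suc k) e)"
      using Gg by (simp del: upt_Suc)
    moreover have "map (case_nat k (case_nat (prim_rec f g k e) e)) [0..<Suc (Suc n)] = k # prim_rec f g k e # map e [0..<n]"
      by (simp only: map_upt_Suc0 nat.case)
    ultimately have "eval Gg (k # prim_rec f g k e # map e [0..<n]) (prim_rec f g (Suc k) e)"
      by simp
    then show ?case using Suc by (intro eval_PrS) auto
  qed
  show ?thesis unfolding recfn_def
    by (rule exI[of _ "Pr n Ff Gg"]) (use * in \<open>simp add: map_upt_Suc0 del: upt_Suc\<close>)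
qed

lemma recfn_comp1: "recfn 1 (\<lambda>e. f (e 0)) \<Longrightarrow> recfn n a \<Longrightarrow> recfn n (\<lambda>e. f (a e))"
  using recfn_comp[of 1 "\<lambda>e. f (e 0)" n "\<lambda>i. a"] by simp

lemma recfn_comp2:
  "recfn 2 (\<lambda>e. f (e 0) (e 1)) \<Longrightarrow> recfn n a \<Longrightarrow> recfn n b \<Longrightarrow> recfn n (\<lambda>e. f (a e) (b e))"
  using recfn_comp[of 2 "\<lambda>e. f (e 0) (e 1)" n "\<lambda>i. [a,b] ! i"]
  by (simp add: less_Suc_eq numeral_2_eq_2)

lemma recfn_Suc1: "recfn 1 (\<lambda>e. Suc (e 0))"
  unfolding recfn_def by (rule exI[of _ S]) (auto intro: eval_S)

lemma recfn_Suc[recfn_intros]: "recfn n a \<Longrightarrow> recfn n (\<lambda>e. Suc (a e))"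
  by (rule recfn_comp1[OF recfn_Suc1])

lemma recfn_add2: "recfn 2 (\<lambda>e. e 0 + e 1)"
proof -
  have "recfn (Suc (Suc 0)) (\<lambda>e. prim_rec (\<lambda>e. e 0) (\<lambda>e. Suc (e 1)) (e 0) (\<lambda>i. e (Suc i)))"
    by (rule recfn_prim_rec) (intro recfn_intros | simp)+
  moreover have "prim_rec (\<lambda>e. e 0) (\<lambda>e. Suc (e 1)) x e = x + e 0" for x e by (induction x) auto
  ultimately show ?thesis by (simp add: numeral_2_eq_2 recfn_cong)
qed

lemma recfn_add[recfn_intros]: "recfn n a \<Longrightarrow> recfn n b \<Longrightarrow> recfn n (\<lambda>e. a e + b e)"
  by (rule recfn_comp2[OF recfn_add2])

lemma recfn_mult2: "recfn 2 (\<lambda>e. e 0 * e 1)"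
proof -
  have "recfn (Suc (Suc 0)) (\<lambda>e. prim_rec (\<lambda>e. 0) (\<lambda>e. e 1 + e 2) (e 0) (\<lambda>i. e (Suc i)))"
    by (rule recfn_prim_rec) (intro recfn_intros | simp)+
  moreover have "prim_rec (\<lambda>e. 0) (\<lambda>e. e 1 + e 2) x e = x * e 0" for x e by (induction x) auto
  ultimately show ?thesis by (simp add: numeral_2_eq_2 recfn_cong)
qed

lemma recfn_mult[recfn_intros]: "recfn n a \<Longrightarrow> recfn n b \<Longrightarrow> recfn n (\<lambda>e. a e * b e)"
  by (rule recfn_comp2[OF recfn_mult2])

lemma recfn_pred1: "recfn 1 (\<lambda>e. e 0 - 1)"
proof -
  have "recfn (Suc 0) (\<lambda>e. prim_rec (\<lambda>e. 0) (\<lambda>e. e 0) (e 0) (\<lambda>i. e (Suc i)))"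
    by (rule recfn_prim_rec) (intro recfn_intros | simp)+
  moreover have "prim_rec (\<lambda>e. 0) (\<lambda>e. e 0) x e = x - 1" for x e by (induction x) auto
  ultimately show ?thesis by (simp add: recfn_cong)
qed

lemma recfn_sub2: "recfn 2 (\<lambda>e. e 0 - e 1)"
proof -
  have "recfn (Suc (Suc 0)) (\<lambda>e. prim_rec (\<lambda>e. e 0) (\<lambda>e. e 1 - 1) (e 0) (\<lambda>i. e (Suc i)))"
    by (rule recfn_prim_rec) (intro recfn_intros recfn_comp1[OF recfn_pred1] | simp)+
  moreover have "prim_rec (\<lambda>e. e 0) (\<lambda>e. e 1 - 1) x e = e 0 - x" for x e by (induction x) auto
  ultimately have "recfn 2 (\<lambda>e. e 1 - e 0)" by (simp add: numeral_2_eq_2 recfn_cong)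
  from recfn_comp2[OF this, of 2 "\<lambda>e. e 1" "\<lambda>e. e 0"] show ?thesis by (simp add: recfn_proj)
qed

lemma recfn_sub[recfn_intros]: "recfn n a \<Longrightarrow> recfn n b \<Longrightarrow> recfn n (\<lambda>e. a e - b e)"
  by (rule recfn_comp2[OF recfn_sub2])

lemma recfn_sum[recfn_intros]:
  assumes "recfn (Suc n) (\<lambda>e. h (e 0) (\<lambda>i. e (Suc i)))" "recfn n B"
  shows "recfn n (\<lambda>e. \<Sum>j<B e. h j e)"
proof -
  have "\<forall>i<Suc n. recfn (Suc (Suc n)) (case_nat (\<lambda>e. e 0) (\<lambda>i e. e (Suc (Suc i))) i)"
    by (auto simp: less_Suc_eq_0_disj intro!: recfn_proj)
  from recfn_comp[OF assms(1) this]
  have g: "recfn (Suc (Suc n)) (\<lambda>e. h (e 0) (\<lambda>i. e (Suc (Suc i))))" by simp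
  have "recfn (Suc n) (\<lambda>e. prim_rec (\<lambda>e. 0) (\<lambda>e. e 1 + h (e 0) (\<lambda>i. e (Suc (Suc i)))) (e 0) (\<lambda>i. e (Suc i)))"
    by (intro recfn_prim_rec recfn_intros g | simp)+
  moreover have "prim_rec (\<lambda>e. 0) (\<lambda>e. e 1 + h (e 0) (\<lambda>i. e (Suc (Suc i)))) x e = (\<Sum>j<x. h j e)" for x e
    by (induction x) auto
  ultimately have S: "recfn (Suc n) (\<lambda>e. \<Sum>j<e 0. h j (\<lambda>i. e (Suc i)))" by (rule recfn_cong)
  have "\<forall>i<Suc n. recfn n (case_nat B (\<lambda>i e. e i) i)"
    using assms(2) by (auto simp: less_Suc_eq_0_disj intro!: recfn_proj)
  from recfn_comp[OF S this] show ?thesis by simp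
qed

(* Decidable predicates: definition by cases, comparisons, Boolean connectives and
   bounded quantifiers, each expressed arithmetically on 0/1-valued indicators. *)
lemma recpred_of_bool[recfn_intros]: "recpred n P \<Longrightarrow> recfn n (\<lambda>e. of_bool (P e))"
  by (simp add: recpred_def)

lemma recfn_if[recfn_intros]:
  "recpred n P \<Longrightarrow> recfn n a \<Longrightarrow> recfn n b \<Longrightarrow> recfn n (\<lambda>e. if P e then a e else b e)"
proof -
  assume "recpred n P" "recfn n a" "recfn n b"
  then have "recfn n (\<lambda>e. of_bool (P e) * a e + (1 - of_bool (P e)) * b e)"
    by (intro recfn_intros | assumption | simp add: recpred_def)+
  then show ?thesis by (rule recfn_cong) simp
qed

lemma recpred_eq[recfn_intros]: "recfn n a \<Longrightarrow> recfn n b \<Longrightarrow> recpred n (\<lambda>e. a e = b e)"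
  unfolding recpred_def
  by (rule recfn_cong[where h="\<lambda>e. 1 - ((a e - b e) + (b e - a e))"])
    (intro recfn_intros | assumption | simp add: recpred_def)+

lemma recpred_less[recfn_intros]: "recfn n a \<Longrightarrow> recfn n b \<Longrightarrow> recpred n (\<lambda>e. a e < b e)"
  unfolding recpred_def
  by (rule recfn_cong[where h="\<lambda>e. 1 - (1 - (b e - a e))"])
    (intro recfn_intros | assumption | simp add: recpred_def)+

lemma recpred_not[recfn_intros]: "recpred n P \<Longrightarrow> recpred n (\<lambda>e. \<not> P e)"
  unfolding recpred_def
  by (rule recfn_cong[where h="\<lambda>e. 1 - of_bool (P e)"])
    (intro recfn_intros | assumption | simp add: recpred_def)+

lemma recpred_and[recfn_intros]: "recpred n P \<Longrightarrow> recpred n Q \<Longrightarrow> recpred n (\<lambda>e. P e \<and> Q e)"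
  unfolding recpred_def
  by (rule recfn_cong[where h="\<lambda>e. of_bool (P e) * of_bool (Q e)"])
    (intro recfn_intros | assumption | simp add: recpred_def)+

lemma recpred_or[recfn_intros]: "recpred n P \<Longrightarrow> recpred n Q \<Longrightarrow> recpred n (\<lambda>e. P e \<or> Q e)"
  unfolding recpred_def
  by (rule recfn_cong[where h="\<lambda>e. 1 - (1 - of_bool (P e)) * (1 - of_bool (Q e))"])
    (intro recfn_intros | assumption | simp add: recpred_def)+

lemma recpred_bex[recfn_intros]:
  assumes "recpred (Suc n) (\<lambda>e. P (e 0) (\<lambda>i. e (Suc i)))" "recfn n B"
  shows "recpred n (\<lambda>e. \<exists>j<B e. P j e)"
proof -
  have "recfn n (\<lambda>e. 1 - (1 - (\<Sum>j<B e. of_bool (P j e))))"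
    using assms by (intro recfn_intros | assumption | simp add: recpred_def)+
  moreover have "(1 - (1 - (\<Sum>j<B e. of_bool (P j e)))) = (of_bool (\<exists>j<B e. P j e) :: nat)" for e :: "nat \<Rightarrow> nat"
  proof (cases "\<exists>j<B e. P j e")
    case True
    then obtain j where "j < B e" "P j e" by blast
    then have "(\<Sum>j<B e. of_bool (P j e)) \<ge> (1::nat)"
      using member_le_sum[of j "{..<B e}" "\<lambda>j. of_bool (P j e) :: nat"] by auto
    then have "1 - (1 - (\<Sum>j<B e. of_bool (P j e))) = (1::nat)" by linarith
    then show ?thesis using True by simp
  qed auto
  ultimately show ?thesis unfolding recpred_def by (rule recfn_cong)
qed

lemma recpred_ball[recfn_intros]:
  assumes "recpred (Suc n) (\<lambda>e. P (e 0) (\<lambda>i. e (Suc i)))" "recfn n B"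
  shows "recpred n (\<lambda>e. \<forall>j<B e. P j e)"
proof -
  have "recpred n (\<lambda>e. \<not> (\<exists>j<B e. \<not> P j e))" by (intro recpred_not recpred_bex assms)
  then show ?thesis unfolding recpred_def by (rule recfn_cong) auto
qed

(* Coding of pairs and lists by numbers.  pair is the Cantor pairing function; ncons x c
   codes the list with head x and tail coded by c (0 codes the empty list), so that
   list_encode (x # xs) = ncons x (list_encode xs).  The head, tail, n-th element and
   length of a coded list are given by nhd, ntl, nnth and nlen (nlen counts the nonempty
   iterated tails, which is a bounded and hence computable description). *)
definition pfst :: "nat \<Rightarrow> nat" where "pfst c = fst (prod_decode c)"
definition psnd :: "nat \<Rightarrow> nat" where "psnd c = snd (prod_decode c)"
definition pair :: "nat \<Rightarrow> nat \<Rightarrow> nat" where "pair a b = prod_encode (a, b)"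
definition ncons :: "nat \<Rightarrow> nat \<Rightarrow> nat" where "ncons x c = Suc (pair x c)"
definition nhd :: "nat \<Rightarrow> nat" where "nhd c = pfst (c - 1)"
definition ntl :: "nat \<Rightarrow> nat" where "ntl c = psnd (c - 1)"
definition ntl_pow :: "nat \<Rightarrow> nat \<Rightarrow> nat" where "ntl_pow k c = (ntl ^^ k) c"
definition nnth :: "nat \<Rightarrow> nat \<Rightarrow> nat" where "nnth c i = nhd (ntl_pow i c)"
definition nlen :: "nat \<Rightarrow> nat" where "nlen c = (\<Sum>i<c. of_bool (ntl_pow i c \<noteq> 0))"

lemma pfst_pair[simp]: "pfst (pair a b) = a" and psnd_pair[simp]: "psnd (pair a b) = b"
  by (simp_all add: pfst_def psnd_def pair_def)
lemma pair_fst_snd: "pair (pfst c) (psnd c) = c"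
  by (simp add: pfst_def psnd_def pair_def)
lemma nhd_cons[simp]: "nhd (ncons x c) = x" and ntl_cons[simp]: "ntl (ncons x c) = c"
  by (simp_all add: nhd_def ntl_def ncons_def)
lemma list_encode_Cons: "list_encode (x # xs) = ncons x (list_encode xs)"
  by (simp add: ncons_def pair_def)
lemma ntl0: "ntl 0 = 0"
proof -
  have "prod_encode (0,0) = 0" by (simp add: prod_encode_def)
  hence "prod_decode 0 = (0,0)" by (metis prod_encode_inverse)
  then show ?thesis by (simp add: ntl_def psnd_def)
qed
lemma ntl_pow_Suc: "ntl_pow (Suc i) c = ntl_pow i (ntl c)"
  by (simp only: ntl_pow_def funpow_Suc_right comp_def)
lemma ntl_pow0: "ntl_pow i 0 = 0"
  by (induction i) (simp_all add: ntl_pow_Suc ntl0, simp add: ntl_pow_def)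
lemma ntl_pow_enc: "ntl_pow i (list_encode xs) = list_encode (drop i xs)"
proof (induction i arbitrary: xs)
  case 0 then show ?case by (simp add: ntl_pow_def)
next
  case (Suc i)
  show ?case
  proof (cases xs)
    case Nil then show ?thesis by (simp add: ntl_pow0)
  next
    case (Cons a list)
    then show ?thesis using Suc by (simp only: ntl_pow_Suc list_encode_Cons ntl_cons drop_Suc_Cons)
  qed
qed
lemma nnth_enc[simp]: "i < length xs \<Longrightarrow> nnth (list_encode xs) i = xs ! i"
  by (simp only: nnth_def ntl_pow_enc Cons_nth_drop_Suc[symmetric] list_encode_Cons nhd_cons)
lemma length_le_enc: "length xs \<le> list_encode xs"
proof (induction xs)
  case (Cons x xs)
  have "list_encode xs \<le> pair x (list_encode xs)" unfolding pair_def by (rule le_prod_encode_2)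
  then show ?case using Cons by (simp add: pair_def)
qed simp
lemma nlen_enc[simp]: "nlen (list_encode xs) = length xs"
proof -
  have "(ntl_pow i (list_encode xs) \<noteq> 0) = (i < length xs)" for i
  proof -
    have "(list_encode (drop i xs) = 0) = (drop i xs = [])"
      by (metis list_encode.simps(1) list_encode_eq)
    then show ?thesis by (simp add: ntl_pow_enc not_le)
  qed
  then have "nlen (list_encode xs) = (\<Sum>i<list_encode xs. of_bool (i < length xs))"
    by (simp add: nlen_def)
  also have "\<dots> = card {i. i < list_encode xs \<and> i < length xs}"
    by (simp add: sum.If_cases Int_def)
  also have "{i. i < list_encode xs \<and> i < length xs} = {..<length xs}"
    using length_le_enc[of xs] by auto
  finally show ?thesis by simp
qed
lemma enc_dec_nth: "nnth c i = list_decode c ! i" if "i < nlen c"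
  using that nnth_enc[of i "list_decode c"] nlen_enc[of "list_decode c"] by simp
lemma enc_dec_len: "nlen c = length (list_decode c)"
  using nlen_enc[of "list_decode c"] by simp

lemma list_decode_ncons[simp]: "list_decode (ncons x c) = x # list_decode c"
  by (metis list_decode_inverse list_encode_Cons list_encode_inverse)
lemma nlen_ncons[simp]: "nlen (ncons a c) = Suc (nlen c)"
  by (simp add: enc_dec_len)
lemma nlen_0[simp]: "nlen 0 = 0" by (simp add: nlen_def)
lemma nnth_ncons0[simp]: "nnth (ncons a c) 0 = a" by (simp add: nnth_def ntl_pow_def)
lemma nnth_ncons_Suc[simp]: "nnth (ncons a c) (Suc i) = nnth c i" by (simp add: nnth_def ntl_pow_Suc)

lemma recfn_triangle: "recfn 1 (\<lambda>e. triangle (e 0))"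
proof -
  have "recfn (Suc 0) (\<lambda>e. prim_rec (\<lambda>e. 0) (\<lambda>e. e 1 + Suc (e 0)) (e 0) (\<lambda>i. e (Suc i)))"
    by (intro recfn_prim_rec recfn_intros | simp)+
  moreover have "prim_rec (\<lambda>e. 0) (\<lambda>e. e 1 + Suc (e 0)) x e = triangle x" for x e by (induction x) auto
  ultimately show ?thesis by (simp add: recfn_cong)
qed

lemma recfn_pair2: "recfn 2 (\<lambda>e. pair (e 0) (e 1))"
proof -
  have "recfn 2 (\<lambda>e. triangle (e 0 + e 1) + e 0)"
    by (intro recfn_intros recfn_comp1[OF recfn_triangle] | simp)+
  then show ?thesis by (rule recfn_cong) (simp add: pair_def prod_encode_def)
qed

lemma recfn_pair[recfn_intros]: "recfn n a \<Longrightarrow> recfn n b \<Longrightarrow> recfn n (\<lambda>e. pair (a e) (b e))"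
  by (rule recfn_comp2[OF recfn_pair2])

(* The projections of the pairing are bounded searches, hence computable. *)
lemma pfst_sum: "pfst c = (\<Sum>a<Suc c. if (\<exists>b<Suc c. pair a b = c) then a else 0)"
proof -
  have c: "c = pair (pfst c) (psnd c)" by (simp add: pair_fst_snd)
  have le1: "pfst c \<le> c" "psnd c \<le> c" using c le_prod_encode_1 le_prod_encode_2 pair_def by metis+
  have "(\<exists>b<Suc c. pair a b = c) = (a = pfst c)" if "a < Suc c" for a
    using le1 c by (metis pfst_pair le_imp_less_Suc)
  then have "(\<Sum>a<Suc c. if (\<exists>b<Suc c. pair a b = c) then a else 0) = (\<Sum>a<Suc c. if a = pfst c then a else 0)"
    by (intro sum.cong) auto
  also have "\<dots> = pfst c" using le1 by (simp add: sum.delta')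
  finally show ?thesis by simp
qed

lemma psnd_sum: "psnd c = (\<Sum>b<Suc c. if (\<exists>a<Suc c. pair a b = c) then b else 0)"
proof -
  have c: "c = pair (pfst c) (psnd c)" by (simp add: pair_fst_snd)
  have le1: "pfst c \<le> c" "psnd c \<le> c" using c le_prod_encode_1 le_prod_encode_2 pair_def by metis+
  have "(\<exists>a<Suc c. pair a b = c) = (b = psnd c)" if "b < Suc c" for b
    using le1 c by (metis psnd_pair le_imp_less_Suc)
  then have "(\<Sum>b<Suc c. if (\<exists>a<Suc c. pair a b = c) then b else 0) = (\<Sum>b<Suc c. if b = psnd c then b else 0)"
    by (intro sum.cong) auto
  also have "\<dots> = psnd c" using le1 by (simp add: sum.delta')
  finally show ?thesis by simp
qed

lemma recfn_pfst1: "recfn 1 (\<lambda>e. pfst (e 0))"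
proof -
  have "recfn 1 (\<lambda>e. \<Sum>a<Suc (e 0). if (\<exists>b<Suc (e 0). pair a b = e 0) then a else 0)"
    by (intro recfn_intros | simp)+
  then show ?thesis by (rule recfn_cong) (rule pfst_sum[symmetric])
qed

lemma recfn_psnd1: "recfn 1 (\<lambda>e. psnd (e 0))"
proof -
  have "recfn 1 (\<lambda>e. \<Sum>b<Suc (e 0). if (\<exists>a<Suc (e 0). pair a b = e 0) then b else 0)"
    by (intro recfn_intros | simp)+
  then show ?thesis by (rule recfn_cong) (rule psnd_sum[symmetric])
qed

lemma recfn_pfst[recfn_intros]: "recfn n a \<Longrightarrow> recfn n (\<lambda>e. pfst (a e))"
  by (rule recfn_comp1[OF recfn_pfst1])
lemma recfn_psnd[recfn_intros]: "recfn n a \<Longrightarrow> recfn n (\<lambda>e. psnd (a e))"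
  by (rule recfn_comp1[OF recfn_psnd1])
lemma recfn_ncons[recfn_intros]: "recfn n a \<Longrightarrow> recfn n b \<Longrightarrow> recfn n (\<lambda>e. ncons (a e) (b e))"
  unfolding ncons_def by (intro recfn_intros)
lemma recfn_nhd[recfn_intros]: "recfn n a \<Longrightarrow> recfn n (\<lambda>e. nhd (a e))"
  unfolding nhd_def by (intro recfn_intros | simp)+
lemma recfn_ntl[recfn_intros]: "recfn n a \<Longrightarrow> recfn n (\<lambda>e. ntl (a e))"
  unfolding ntl_def by (intro recfn_intros | simp)+

lemma recfn_ntl_pow2: "recfn 2 (\<lambda>e. ntl_pow (e 0) (e 1))"
proof -
  have "recfn (Suc (Suc 0)) (\<lambda>e. prim_rec (\<lambda>e. e 0) (\<lambda>e. ntl (e 1)) (e 0) (\<lambda>i. e (Suc i)))"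
    by (intro recfn_prim_rec recfn_intros | simp)+
  moreover have "prim_rec (\<lambda>e. e 0) (\<lambda>e. ntl (e 1)) x e = ntl_pow x (e 0)" for x e
    by (induction x) (auto simp: ntl_pow_def)
  ultimately show ?thesis by (simp add: numeral_2_eq_2 recfn_cong)
qed
lemma recfn_ntl_pow[recfn_intros]: "recfn n a \<Longrightarrow> recfn n b \<Longrightarrow> recfn n (\<lambda>e. ntl_pow (a e) (b e))"
  by (rule recfn_comp2[OF recfn_ntl_pow2])
lemma recfn_nnth[recfn_intros]: "recfn n a \<Longrightarrow> recfn n b \<Longrightarrow> recfn n (\<lambda>e. nnth (a e) (b e))"
  unfolding nnth_def by (intro recfn_intros)
lemma recfn_nlen1: "recfn 1 (\<lambda>e. nlen (e 0))"
  unfolding nlen_def by (intro recfn_intros | simp)+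
lemma recfn_nlen[recfn_intros]: "recfn n a \<Longrightarrow> recfn n (\<lambda>e. nlen (a e))"
  by (rule recfn_comp1[OF recfn_nlen1])

(* A record is a number of one of two kinds:
     pair 0 c                       claims that c is the code of a program;
     ev_record c x r a              claims that program c on the coded argument list x
                                    yields r (a is auxiliary data: for compositions, the
                                    coded list of intermediate values).
   A record is justified relative to a set T of earlier records if its claim follows by one
   evaluation rule from claims in T.  All quantifiers in these definitions are bounded by T,
   so justification of a record relative to a finite list is decidable. *)
definition rec_prog :: "nat \<Rightarrow> nat" where "rec_prog q = pfst (psnd q)"
definition rec_args :: "nat \<Rightarrow> nat" where "rec_args q = pfst (psnd (psnd q))"
definition rec_res :: "nat \<Rightarrow> nat" where "rec_res q = pfst (psnd (psnd (psnd q)))"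
definition rec_aux :: "nat \<Rightarrow> nat" where "rec_aux q = psnd (psnd (psnd (psnd q)))"
definition ev_record :: "nat \<Rightarrow> nat \<Rightarrow> nat \<Rightarrow> nat \<Rightarrow> nat" where
  "ev_record c x r a = pair 1 (pair c (pair x (pair r a)))"

lemma ev_record_simps[simp]:
  "pfst (ev_record c x r a) = 1" "rec_prog (ev_record c x r a) = c" "rec_args (ev_record c x r a) = x"
  "rec_res (ev_record c x r a) = r" "rec_aux (ev_record c x r a) = a"
  by (simp_all add: ev_record_def rec_prog_def rec_args_def rec_res_def rec_aux_def)

(* The claims available in T: c is a code; c yields r on x; c yields a nonzero value on x;
   and, for a primitive recursion c with step program g, the recursion step leading to
   the value r on the argument list x with nonzero head. *)
definition has_code :: "nat set \<Rightarrow> nat \<Rightarrow> bool" where "has_code T c \<longleftrightarrow> pair 0 c \<in> T"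
definition has_eval :: "nat set \<Rightarrow> nat \<Rightarrow> nat \<Rightarrow> nat \<Rightarrow> bool" where
  "has_eval T c x r \<longleftrightarrow> (\<exists>q\<in>T. pfst q = 1 \<and> rec_prog q = c \<and> rec_args q = x \<and> rec_res q = r)"
definition has_pos_eval :: "nat set \<Rightarrow> nat \<Rightarrow> nat \<Rightarrow> bool" where
  "has_pos_eval T c x \<longleftrightarrow> (\<exists>q\<in>T. pfst q = 1 \<and> rec_prog q = c \<and> rec_args q = x \<and> rec_res q \<noteq> 0)"
definition has_step_eval :: "nat set \<Rightarrow> nat \<Rightarrow> nat \<Rightarrow> nat \<Rightarrow> nat \<Rightarrow> bool" where
  "has_step_eval T c g x r \<longleftrightarrow>
     (\<exists>q\<in>T. pfst q = 1 \<and> rec_prog q = c \<and> rec_args q = ncons (nhd x - 1) (ntl x) \<and>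
       has_eval T g (ncons (nhd x - 1) (ncons (rec_res q) (ntl x))) r)"

definition code_just :: "nat set \<Rightarrow> nat \<Rightarrow> bool" where
  "code_just T c \<longleftrightarrow>
   (c = pair 0 0) \<or> (c = pair 1 0) \<or> pfst c = 2 \<or>
   (pfst c = 3 \<and> has_code T (pfst (psnd (psnd c))) \<and>
      (\<forall>j<nlen (psnd (psnd (psnd c))). has_code T (nnth (psnd (psnd (psnd c))) j))) \<or>
   (pfst c = 4 \<and> has_code T (pfst (psnd (psnd c))) \<and> has_code T (psnd (psnd (psnd c)))) \<or>
   (pfst c = 5 \<and> has_code T (psnd (psnd c)))"

definition eval_just :: "nat set \<Rightarrow> nat \<Rightarrow> nat \<Rightarrow> nat \<Rightarrow> nat \<Rightarrow> bool" where
  "eval_just T c x r a \<longleftrightarrow> has_code T c \<and> (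
   (pfst c = 0 \<and> r = 0) \<or>
   (pfst c = 1 \<and> nlen x = 1 \<and> r = Suc (nnth x 0)) \<or>
   (pfst c = 2 \<and> psnd (psnd c) < pfst (psnd c) \<and> nlen x = pfst (psnd c) \<and> r = nnth x (psnd (psnd c))) \<or>
   (pfst c = 3 \<and> nlen x = pfst (psnd c) \<and> nlen a = nlen (psnd (psnd (psnd c))) \<and>
      (\<forall>j<nlen a. has_eval T (nnth (psnd (psnd (psnd c))) j) x (nnth a j)) \<and>
      has_eval T (pfst (psnd (psnd c))) a r) \<or>
   (pfst c = 4 \<and> nlen x = Suc (pfst (psnd c)) \<and>
      ((nhd x = 0 \<and> has_eval T (pfst (psnd (psnd c))) (ntl x) r) \<or>
       (nhd x \<noteq> 0 \<and> has_step_eval T c (psnd (psnd (psnd c))) x r))) \<or>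
   (pfst c = 5 \<and> nlen x = pfst (psnd c) \<and> has_eval T (psnd (psnd c)) (ncons r x) 0 \<and>
      (\<forall>z<r. has_pos_eval T (psnd (psnd c)) (ncons z x))))"

definition justified :: "nat set \<Rightarrow> nat \<Rightarrow> bool" where
  "justified T q \<longleftrightarrow> (pfst q = 0 \<and> code_just T (psnd q)) \<or>
     (pfst q = 1 \<and> eval_just T (rec_prog q) (rec_args q) (rec_res q) (rec_aux q))"

definition sound :: "nat \<Rightarrow> bool" where
  "sound q \<longleftrightarrow> (pfst q = 0 \<longrightarrow> (\<exists>f. enc f = psnd q)) \<and>
     (pfst q = 1 \<longrightarrow> (\<exists>f. enc f = rec_prog q \<and> eval f (list_decode (rec_args q)) (rec_res q)))"

lemma enc_pair: "enc Z = pair 0 0" "enc S = pair 1 0" "enc (Id n k) = pair 2 (pair n k)"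
  "enc (Cn n f gs) = pair 3 (pair n (pair (enc f) (list_encode (map enc gs))))"
  "enc (Pr n f g) = pair 4 (pair n (pair (enc f) (enc g)))"
  "enc (Mn n f) = pair 5 (pair n (enc f))"
  by (simp_all add: pair_def)

lemma enc_eq_iff[simp]: "enc f = enc g \<longleftrightarrow> f = g" using enc_inj by blast
declare enc.simps[simp del] enc_pair[simp]
declare list_encode.simps(2)[simp del] list_encode_Cons[simp]

lemma enc_all: "(\<forall>y\<in>set ys. \<exists>g. enc g = y) \<Longrightarrow> \<exists>gs. map enc gs = ys"
proof (induction ys)
  case (Cons y ys)
  then obtain g gs where "enc g = y" "map enc gs = ys" by auto
  then show ?case by (intro exI[of _ "g # gs"]) simp
qed simp

lemma has_code_sound: "\<forall>q\<in>T. sound q \<Longrightarrow> has_code T c \<Longrightarrow> \<exists>f. enc f = c"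
  unfolding has_code_def sound_def by (metis pfst_pair psnd_pair)

lemma has_eval_sound: "\<forall>q\<in>T. sound q \<Longrightarrow> has_eval T c x r \<Longrightarrow> \<exists>f. enc f = c \<and> eval f (list_decode x) r"
  unfolding has_eval_def sound_def by auto

lemma has_pos_eval_sound: "\<forall>q\<in>T. sound q \<Longrightarrow> has_pos_eval T c x \<Longrightarrow> \<exists>f v. enc f = c \<and> eval f (list_decode x) (Suc v)"
  unfolding has_pos_eval_def sound_def by (metis not0_implies_Suc)

lemma has_step_eval_sound: "\<forall>q\<in>T. sound q \<Longrightarrow> has_step_eval T c g x r \<Longrightarrow>
   \<exists>F y g'. enc F = c \<and> eval F (list_decode (ncons (nhd x - 1) (ntl x))) y \<and>
     enc g' = g \<and> eval g' (list_decode (ncons (nhd x - 1) (ncons y (ntl x)))) r"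
proof -
  assume T: "\<forall>q\<in>T. sound q" and "has_step_eval T c g x r"
  then obtain q where q: "q \<in> T" "pfst q = 1" "rec_prog q = c" "rec_args q = ncons (nhd x - 1) (ntl x)"
     "has_eval T g (ncons (nhd x - 1) (ncons (rec_res q) (ntl x))) r" unfolding has_step_eval_def by blast
  from q T obtain F where "enc F = c" "eval F (list_decode (ncons (nhd x - 1) (ntl x))) (rec_res q)"
    unfolding sound_def by auto
  moreover from has_eval_sound[OF T q(5)] obtain g' where
    "enc g' = g" "eval g' (list_decode (ncons (nhd x - 1) (ncons (rec_res q) (ntl x)))) r" by blast
  ultimately show ?thesis by blast
qed

lemma has_code_list_sound:
  assumes T: "\<forall>q\<in>T. sound q" and codes: "\<forall>j<nlen b. has_code T (nnth b j)"
  shows "\<exists>gs. map enc gs = list_decode b"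
proof (rule enc_all, intro ballI)
  fix y assume "y \<in> set (list_decode b)"
  then obtain j where "j < nlen b" "y = nnth b j"
    by (auto simp: in_set_conv_nth enc_dec_len enc_dec_nth)
  then show "\<exists>g. enc g = y" using codes has_code_sound[OF T] by blast
qed

lemma code_just_sound:
  assumes T: "\<forall>q\<in>T. sound q" and ok: "code_just T c"
  shows "\<exists>f. enc f = c"
proof -
  obtain t n b where c: "c = pair t (pair n b)" by (metis pair_fst_snd)
  obtain b1 b2 where b: "b = pair b1 b2" by (metis pair_fst_snd)
  from ok consider "c = enc Z" | "c = enc S" | "t = 2" |
     "t = 3" "has_code T b1" "\<forall>j<nlen b2. has_code T (nnth b2 j)" |
     "t = 4" "has_code T b1" "has_code T b2" | "t = 5" "has_code T b"
    unfolding code_just_def by (auto simp: c b)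
  then show ?thesis
  proof cases
    case 3 then show ?thesis using c by (metis enc_pair(3))
  next
    case 4
    obtain f where "enc f = b1" using has_code_sound[OF T 4(2)] by blast
    moreover obtain gs where "map enc gs = list_decode b2" using has_code_list_sound[OF T 4(3)] by blast
    ultimately have "enc (Cn n f gs) = c" using c b 4(1) by simp
    then show ?thesis by blast
  next
    case 5
    obtain f where "enc f = b1" using has_code_sound[OF T 5(2)] by blast
    moreover obtain g where "enc g = b2" using has_code_sound[OF T 5(3)] by blast
    ultimately have "enc (Pr n f g) = c" using c b 5(1) by simp
    then show ?thesis by blast
  next
    case 6
    obtain f where "enc f = b" using has_code_sound[OF T 6(2)] by blast
    then have "enc (Mn n f) = c" using c 6(1) by simp
    then show ?thesis by blast
  qed blast+
qed

lemma eval_just_Cn_sound: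
  assumes T: "\<forall>q\<in>T. sound q" and ok: "eval_just T (enc (Cn n f gs)) (list_encode xs) r a"
  shows "eval (Cn n f gs) xs r"
proof -
  define ys where "ys = list_decode a"
  have a: "a = list_encode ys" by (simp add: ys_def)
  from ok have len: "length xs = n" "length ys = length gs"
    and args: "\<forall>j<length gs. has_eval T (enc (gs ! j)) (list_encode xs) (ys ! j)"
    and res: "has_eval T (enc f) a r"
    unfolding eval_just_def a by auto
  have "list_all2 (\<lambda>g y. eval g xs y) gs ys"
    unfolding list_all2_conv_all_nth
  proof (intro conjI allI impI)
    show "length gs = length ys" using len by simp
    fix j assume "j < length gs"
    then show "eval (gs ! j) xs (ys ! j)" using has_eval_sound[OF T] args by fastforce
  qed
  moreover have "eval f ys r" using has_eval_sound[OF T res] ys_def by auto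
  ultimately show ?thesis using len by (intro eval_Cn) auto
qed

lemma eval_just_Pr_sound:
  assumes T: "\<forall>q\<in>T. sound q" and ok: "eval_just T (enc (Pr n f g)) (list_encode xs) r a"
  shows "eval (Pr n f g) xs r"
proof -
  from ok obtain k ys where xs: "xs = k # ys" and len: "length ys = n"
    unfolding eval_just_def by (cases xs) auto
  show ?thesis
  proof (cases k)
    case 0
    then have "has_eval T (enc f) (list_encode ys) r" using ok unfolding eval_just_def xs by simp
    then have "eval f ys r" using has_eval_sound[OF T] by fastforce
    then show ?thesis using xs 0 len by (auto intro: eval_Pr0)
  next
    case (Suc k')
    then have "has_step_eval T (enc (Pr n f g)) (enc g) (list_encode xs) r"
      using ok unfolding eval_just_def xs by simp
    from has_step_eval_sound[OF T this] obtain y where "eval (Pr n f g) (k' # ys) y" "eval g (k' # y # ys) r"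
      by (auto simp: xs Suc simp del: enc_pair)
    then show ?thesis using xs Suc len by (auto intro: eval_PrS)
  qed
qed

lemma eval_just_Mn_sound:
  assumes T: "\<forall>q\<in>T. sound q" and ok: "eval_just T (enc (Mn n f)) (list_encode xs) r a"
  shows "eval (Mn n f) xs r"
proof -
  from ok have len: "length xs = n" and zero: "has_eval T (enc f) (list_encode (r # xs)) 0"
    and pos: "\<forall>z<r. has_pos_eval T (enc f) (list_encode (z # xs))"
    unfolding eval_just_def by auto
  have "eval f (r # xs) 0" using has_eval_sound[OF T zero] by auto
  moreover have "\<forall>z<r. \<exists>v. eval f (z # xs) (Suc v)" using has_pos_eval_sound[OF T] pos by fastforce
  ultimately show ?thesis using len by (intro eval_Mn)
qed

lemma eval_just_sound:
  assumes T: "\<forall>q\<in>T. sound q" and ok: "eval_just T c x r a"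
  shows "\<exists>f. enc f = c \<and> eval f (list_decode x) r"
proof -
  obtain F where c: "c = enc F" using ok has_code_sound[OF T] unfolding eval_just_def by metis
  define xs where "xs = list_decode x"
  have ok': "eval_just T (enc F) (list_encode xs) r a" using ok c by (simp add: xs_def)
  have "eval F xs r"
  proof (cases F)
    case Z then show ?thesis using ok' by (auto simp: eval_just_def intro: eval_Z)
  next
    case S then show ?thesis using ok' by (cases xs) (auto simp: eval_just_def intro: eval_S)
  next
    case (Id n k) then show ?thesis using ok' by (auto simp: eval_just_def intro: eval_Id)
  next
    case (Cn n f gs) then show ?thesis using eval_just_Cn_sound[OF T] ok' by simp
  next
    case (Pr n f g) then show ?thesis using eval_just_Pr_sound[OF T] ok' by simp
  next
    case (Mn n f) then show ?thesis using eval_just_Mn_sound[OF T] ok' by simp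
  qed
  then show ?thesis using c xs_def by blast
qed

lemma justified_sound: "\<forall>q\<in>T. sound q \<Longrightarrow> justified T q \<Longrightarrow> sound q"
proof -
  assume T: "\<forall>q\<in>T. sound q" and J: "justified T q"
  show "sound q" unfolding sound_def
  proof (intro conjI impI)
    assume "pfst q = 0" then have "code_just T (psnd q)" using J unfolding justified_def by simp
    then show "\<exists>f. enc f = psnd q" using code_just_sound[OF T] by blast
  next
    assume "pfst q = 1"
    then have "eval_just T (rec_prog q) (rec_args q) (rec_res q) (rec_aux q)"
      using J unfolding justified_def by simp
    then show "\<exists>f. enc f = rec_prog q \<and> eval f (list_decode (rec_args q)) (rec_res q)"
      using eval_just_sound[OF T] by blast
  qed
qed

definition valid_cert :: "nat list \<Rightarrow> bool" where
  "valid_cert L \<longleftrightarrow> (\<forall>i<length L. justified (set (take i L)) (L ! i))"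

lemma valid_cert_sound:
  assumes v: "valid_cert L" and q: "q \<in> set L"
  shows "sound q"
proof -
  have "sound (L ! i)" if "i < length L" for i
    using that
  proof (induction i rule: less_induct)
    case (less i)
    then have "\<forall>q\<in>set (take i L). sound q" by (auto simp: in_set_conv_nth)
    then show ?case using justified_sound v less.prems unfolding valid_cert_def by blast
  qed
  then show ?thesis using q by (auto simp: in_set_conv_nth)
qed

lemma has_code_mono: "T \<subseteq> T' \<Longrightarrow> has_code T c \<Longrightarrow> has_code T' c" unfolding has_code_def by blast
lemma has_eval_mono: "T \<subseteq> T' \<Longrightarrow> has_eval T c x r \<Longrightarrow> has_eval T' c x r" unfolding has_eval_def by blast
lemma has_pos_eval_mono: "T \<subseteq> T' \<Longrightarrow> has_pos_eval T c x \<Longrightarrow> has_pos_eval T' c x" unfolding has_pos_eval_def by blast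
lemma has_step_eval_mono: "T \<subseteq> T' \<Longrightarrow> has_step_eval T c g x r \<Longrightarrow> has_step_eval T' c g x r"
  unfolding has_step_eval_def using has_eval_mono by blast
lemma code_just_mono: assumes "T \<subseteq> T'" "code_just T c" shows "code_just T' c"
  using assms(2) has_code_mono[OF assms(1)] unfolding code_just_def by blast
lemma eval_just_mono: assumes "T \<subseteq> T'" "eval_just T c x r a" shows "eval_just T' c x r a"
  using assms(2) has_code_mono[OF assms(1)] has_eval_mono[OF assms(1)]
    has_pos_eval_mono[OF assms(1)] has_step_eval_mono[OF assms(1)]
  unfolding eval_just_def by blast
lemma justified_mono: assumes "T \<subseteq> T'" "justified T q" shows "justified T' q"
  using assms(2) code_just_mono[OF assms(1)] eval_just_mono[OF assms(1)] unfolding justified_def by blast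

lemma has_code_Un[simp]: "has_code (A \<union> B) c \<longleftrightarrow> has_code A c \<or> has_code B c"
  unfolding has_code_def by blast
lemma has_eval_Un[simp]: "has_eval (A \<union> B) c x r \<longleftrightarrow> has_eval A c x r \<or> has_eval B c x r"
  unfolding has_eval_def by blast

lemma has_pos_eval_intro: "has_eval T c x (Suc v) \<Longrightarrow> has_pos_eval T c x"
  unfolding has_eval_def has_pos_eval_def by auto

lemma justified_code: "code_just T c \<Longrightarrow> justified T (pair 0 c)"
  by (simp add: justified_def)
lemma justified_ev_record: "eval_just T c x r a \<Longrightarrow> justified T (ev_record c x r a)"
  by (simp add: justified_def)

lemma valid_cert_nil: "valid_cert []" by (simp add: valid_cert_def)

lemma valid_cert_append: "valid_cert L1 \<Longrightarrow> valid_cert L2 \<Longrightarrow> valid_cert (L1 @ L2)"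
  unfolding valid_cert_def
proof (intro allI impI)
  fix i assume v1: "\<forall>i<length L1. justified (set (take i L1)) (L1 ! i)"
    and v2: "\<forall>i<length L2. justified (set (take i L2)) (L2 ! i)" and i: "i < length (L1 @ L2)"
  show "justified (set (take i (L1 @ L2))) ((L1 @ L2) ! i)"
  proof (cases "i < length L1")
    case True then show ?thesis using v1 by (simp add: nth_append)
  next
    case False
    then obtain j where j: "i = length L1 + j" "j < length L2" using i
      by (metis add_diff_inverse_nat length_append nat_add_left_cancel_less)
    then have "justified (set (take j L2)) (L2 ! j)" using v2 by blast
    moreover have "set (take j L2) \<subseteq> set (take i (L1 @ L2))" using j by auto
    ultimately have "justified (set (take i (L1 @ L2))) (L2 ! j)" using justified_mono by blast
    then show ?thesis using j by (simp add: nth_append)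
  qed
qed

lemma valid_cert_snoc: "valid_cert L \<Longrightarrow> justified (set L) q \<Longrightarrow> valid_cert (L @ [q])"
  unfolding valid_cert_def by (auto simp: nth_append less_Suc_eq)

lemma valid_cert_collect:
  assumes "\<forall>z\<in>set zs. \<exists>L. valid_cert L \<and> Q z (set L)"
    and mono: "\<And>z T T'. T \<subseteq> T' \<Longrightarrow> Q z T \<Longrightarrow> Q z T'"
  shows "\<exists>L. valid_cert L \<and> (\<forall>z\<in>set zs. Q z (set L))"
  using assms(1)
proof (induction zs)
  case Nil then show ?case using valid_cert_nil by auto
next
  case (Cons z zs)
  then obtain L1 L2 where "valid_cert L1" "Q z (set L1)" "valid_cert L2" "\<forall>z\<in>set zs. Q z (set L2)" by auto
  moreover have "Q z (set (L1 @ L2))" using mono[of "set L1" "set (L1 @ L2)"] \<open>Q z (set L1)\<close> by auto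
  moreover have "\<forall>z\<in>set zs. Q z (set (L1 @ L2))"
    using mono[of "set L2" "set (L1 @ L2)"] \<open>\<forall>z\<in>set zs. Q z (set L2)\<close> by auto
  ultimately show ?case using valid_cert_append[of L1 L2] by (intro exI[of _ "L1 @ L2"]) auto
qed

definition eval_certified :: "nat \<Rightarrow> nat \<Rightarrow> nat \<Rightarrow> bool" where
  "eval_certified c x r \<longleftrightarrow> (\<exists>L. valid_cert L \<and> has_eval (set L) c x r)"

lemma eval_certified_step: "valid_cert L \<Longrightarrow> eval_just (set L) c x r a \<Longrightarrow> eval_certified c x r"
proof -
  assume "valid_cert L" "eval_just (set L) c x r a"
  then have "valid_cert (L @ [ev_record c x r a])" by (metis valid_cert_snoc justified_ev_record)
  moreover have "has_eval (set (L @ [ev_record c x r a])) c x r"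
    unfolding has_eval_def by (intro bexI[of _ "ev_record c x r a"]) auto
  ultimately show ?thesis unfolding eval_certified_def by blast
qed

lemma code_certified_step: "valid_cert L \<Longrightarrow> code_just (set L) c \<Longrightarrow> \<exists>L'. valid_cert L' \<and> has_code (set L') c"
proof -
  assume "valid_cert L" "code_just (set L) c"
  then have "valid_cert (L @ [pair 0 c])" by (metis valid_cert_snoc justified_code)
  moreover have "has_code (set (L @ [pair 0 c])) c" unfolding has_code_def by simp
  ultimately show ?thesis by blast
qed

lemma code_complete: "\<exists>L. valid_cert L \<and> has_code (set L) (enc f)"
proof (induction f)
  case (Cn n f gs)
  obtain L1 where L1: "valid_cert L1" "has_code (set L1) (enc f)" using Cn.IH(1) by blast
  obtain L2 where L2: "valid_cert L2" "\<forall>g\<in>set gs. has_code (set L2) (enc g)"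
    using valid_cert_collect[of gs "\<lambda>g T. has_code T (enc g)"] Cn.IH(2) has_code_mono by blast
  have "code_just (set (L1 @ L2)) (enc (Cn n f gs))"
    using L1(2) L2(2) unfolding code_just_def by auto
  then show ?case using valid_cert_append[OF L1(1) L2(1)] code_certified_step by blast
next
  case (Pr n f g)
  obtain L1 where L1: "valid_cert L1" "has_code (set L1) (enc f)" using Pr.IH(1) by blast
  obtain L2 where L2: "valid_cert L2" "has_code (set L2) (enc g)" using Pr.IH(2) by blast
  have "code_just (set (L1 @ L2)) (enc (Pr n f g))"
    using L1(2) L2(2) unfolding code_just_def by auto
  then show ?case using valid_cert_append[OF L1(1) L2(1)] code_certified_step by blast
next
  case (Mn n f)
  then obtain L1 where L1: "valid_cert L1" "has_code (set L1) (enc f)" by blast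
  then have "code_just (set L1) (enc (Mn n f))" unfolding code_just_def by simp
  then show ?case using L1(1) code_certified_step by blast
qed (rule code_certified_step[OF valid_cert_nil], simp add: code_just_def)+

lemma eval_certified_Z: "eval_certified (enc Z) x 0"
proof -
  obtain L where L: "valid_cert L" "has_code (set L) (enc Z)" using code_complete by blast
  then have "eval_just (set L) (enc Z) x 0 0" by (simp add: eval_just_def)
  then show ?thesis using L(1) by (rule eval_certified_step[rotated])
qed

lemma eval_certified_S: "eval_certified (enc S) (list_encode [v]) (Suc v)"
proof -
  obtain L where L: "valid_cert L" "has_code (set L) (enc S)" using code_complete by blast
  then have "eval_just (set L) (enc S) (list_encode [v]) (Suc v) 0" by (simp add: eval_just_def)
  then show ?thesis using L(1) by (rule eval_certified_step[rotated])
qed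

lemma eval_certified_Id:
  assumes "k < n" "length xs = n"
  shows "eval_certified (enc (Id n k)) (list_encode xs) (xs ! k)"
proof -
  obtain L where L: "valid_cert L" "has_code (set L) (enc (Id n k))" using code_complete by blast
  then have "eval_just (set L) (enc (Id n k)) (list_encode xs) (xs ! k) 0"
    using assms by (simp add: eval_just_def)
  then show ?thesis using L(1) by (rule eval_certified_step[rotated])
qed

lemma eval_certified_Cn:
  assumes len: "length xs = n" "length ys = length gs"
    and args: "\<forall>j<length gs. eval_certified (enc (gs ! j)) (list_encode xs) (ys ! j)"
    and res: "eval_certified (enc f) (list_encode ys) z"
  shows "eval_certified (enc (Cn n f gs)) (list_encode xs) z"
proof -
  obtain L1 where L1: "valid_cert L1" "has_code (set L1) (enc (Cn n f gs))" using code_complete by blast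
  obtain L2 where L2: "valid_cert L2"
      "\<forall>j\<in>set [0..<length gs]. has_eval (set L2) (enc (gs ! j)) (list_encode xs) (ys ! j)"
    using valid_cert_collect[of "[0..<length gs]" "\<lambda>j T. has_eval T (enc (gs ! j)) (list_encode xs) (ys ! j)"]
      args has_eval_mono unfolding eval_certified_def by auto
  obtain L3 where L3: "valid_cert L3" "has_eval (set L3) (enc f) (list_encode ys) z"
    using res unfolding eval_certified_def by blast
  have "eval_just (set (L1 @ L2 @ L3)) (enc (Cn n f gs)) (list_encode xs) z (list_encode ys)"
    using len L1(2) L2(2) L3(2) unfolding eval_just_def by auto
  then show ?thesis using valid_cert_append[OF L1(1) valid_cert_append[OF L2(1) L3(1)]]
    by (rule eval_certified_step[rotated])
qed

lemma eval_certified_Pr0: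
  assumes "length xs = n" "eval_certified (enc f) (list_encode xs) y"
  shows "eval_certified (enc (Pr n f g)) (list_encode (0 # xs)) y"
proof -
  obtain L1 where L1: "valid_cert L1" "has_code (set L1) (enc (Pr n f g))" using code_complete by blast
  obtain L2 where L2: "valid_cert L2" "has_eval (set L2) (enc f) (list_encode xs) y"
    using assms(2) unfolding eval_certified_def by blast
  have "eval_just (set (L1 @ L2)) (enc (Pr n f g)) (list_encode (0 # xs)) y 0"
    using assms(1) L1(2) L2(2) unfolding eval_just_def by auto
  then show ?thesis using valid_cert_append[OF L1(1) L2(1)] by (rule eval_certified_step[rotated])
qed

lemma eval_certified_PrS:
  assumes "length xs = n" "eval_certified (enc (Pr n f g)) (list_encode (k # xs)) y"
    "eval_certified (enc g) (list_encode (k # y # xs)) z"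
  shows "eval_certified (enc (Pr n f g)) (list_encode (Suc k # xs)) z"
proof -
  obtain L1 where L1: "valid_cert L1" "has_code (set L1) (enc (Pr n f g))" using code_complete by blast
  obtain L2 where L2: "valid_cert L2" "has_eval (set L2) (enc (Pr n f g)) (list_encode (k # xs)) y"
    using assms(2) unfolding eval_certified_def by blast
  obtain L3 where L3: "valid_cert L3" "has_eval (set L3) (enc g) (list_encode (k # y # xs)) z"
    using assms(3) unfolding eval_certified_def by blast
  define T where "T = set (L1 @ L2 @ L3)"
  obtain q where q: "q \<in> T" "pfst q = 1" "rec_prog q = enc (Pr n f g)" "rec_args q = ncons k (list_encode xs)"
    "rec_res q = y"
    using L2(2) unfolding has_eval_def T_def by auto
  have "has_step_eval T (enc (Pr n f g)) (enc g) (list_encode (Suc k # xs)) z"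
    unfolding has_step_eval_def using q has_eval_mono[OF _ L3(2), of T] by (intro bexI[of _ q]) (auto simp: T_def)
  then have "eval_just T (enc (Pr n f g)) (list_encode (Suc k # xs)) z 0"
    using assms(1) has_code_mono[OF _ L1(2), of T] unfolding eval_just_def by (simp add: T_def)
  then show ?thesis using valid_cert_append[OF L1(1) valid_cert_append[OF L2(1) L3(1)]]
    unfolding T_def by (rule eval_certified_step[rotated])
qed

lemma eval_certified_Mn:
  assumes "length xs = n" "eval_certified (enc f) (list_encode (y # xs)) 0"
    "\<forall>z<y. \<exists>v. eval_certified (enc f) (list_encode (z # xs)) (Suc v)"
  shows "eval_certified (enc (Mn n f)) (list_encode xs) y"
proof -
  obtain L1 where L1: "valid_cert L1" "has_code (set L1) (enc (Mn n f))" using code_complete by blast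
  obtain L2 where L2: "valid_cert L2" "has_eval (set L2) (enc f) (list_encode (y # xs)) 0"
    using assms(2) unfolding eval_certified_def by blast
  have "\<forall>z\<in>set [0..<y]. \<exists>L. valid_cert L \<and> (\<exists>v. has_eval (set L) (enc f) (list_encode (z # xs)) (Suc v))"
  proof
    fix z assume "z \<in> set [0..<y]"
    then have "z < y" by simp
    then show "\<exists>L. valid_cert L \<and> (\<exists>v. has_eval (set L) (enc f) (list_encode (z # xs)) (Suc v))"
      using assms(3) unfolding eval_certified_def by blast
  qed
  then obtain L3 where L3: "valid_cert L3"
      "\<forall>z\<in>set [0..<y]. \<exists>v. has_eval (set L3) (enc f) (list_encode (z # xs)) (Suc v)"
    using valid_cert_collect[of "[0..<y]" "\<lambda>z T. \<exists>v. has_eval T (enc f) (list_encode (z # xs)) (Suc v)"]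
      has_eval_mono by blast
  have "\<forall>z<y. has_pos_eval (set (L1 @ L2 @ L3)) (enc f) (list_encode (z # xs))"
  proof (intro allI impI)
    fix z assume "z < y"
    then have "z \<in> set [0..<y]" by simp
    then obtain v where "has_eval (set L3) (enc f) (list_encode (z # xs)) (Suc v)" using L3(2) by blast
    then show "has_pos_eval (set (L1 @ L2 @ L3)) (enc f) (list_encode (z # xs))"
      by (intro has_pos_eval_intro[of _ _ _ v]) simp
  qed
  then have "eval_just (set (L1 @ L2 @ L3)) (enc (Mn n f)) (list_encode xs) y 0"
    using assms(1) L1(2) L2(2) unfolding eval_just_def by simp
  then show ?thesis using valid_cert_append[OF L1(1) valid_cert_append[OF L2(1) L3(1)]]
    by (rule eval_certified_step[rotated])
qed

lemma eval_complete: "eval f xs y \<Longrightarrow> eval_certified (enc f) (list_encode xs) y"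
proof (induction rule: eval.induct)
  case (eval_Z xs) show ?case by (rule eval_certified_Z)
next
  case (eval_S x) show ?case by (rule eval_certified_S)
next
  case (eval_Id k n xs) then show ?case by (rule eval_certified_Id)
next
  case (eval_Cn xs n gs ys f z)
  then show ?case
    by (intro eval_certified_Cn) (auto simp: list_all2_conv_all_nth)
next
  case (eval_Pr0 xs n f y g)
  show ?case by (rule eval_certified_Pr0[OF eval_Pr0.hyps(1) eval_Pr0.IH])
next
  case (eval_PrS xs n f g k y z)
  show ?case by (rule eval_certified_PrS[OF eval_PrS.hyps(1) eval_PrS.IH])
next
  case (eval_Mn xs n f y) then show ?case by (intro eval_certified_Mn) auto
qed

definition valid_cert_code :: "nat \<Rightarrow> bool" where
  "valid_cert_code d \<longleftrightarrow> (\<forall>i<nlen d. justified (nnth d ` {..<i}) (nnth d i))"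

lemma valid_cert_code_enc: "valid_cert_code (list_encode L) = valid_cert L"
proof -
  have "nnth (list_encode L) ` {..<i} = set (take i L)" if "i < length L" for i
  proof -
    have "nnth (list_encode L) ` {..<i} = (!) L ` {0..<i}"
      using that by (intro image_cong) auto
    also have "\<dots> = set (take i L)" using that by (simp add: nth_image)
    finally show ?thesis .
  qed
  then show ?thesis unfolding valid_cert_code_def valid_cert_def by simp
qed

definition halt_cert :: "nat \<Rightarrow> nat \<Rightarrow> bool" where
  "halt_cert t c \<longleftrightarrow> valid_cert_code t \<and>
     (\<exists>i<nlen t. pfst (nnth t i) = 1 \<and> rec_prog (nnth t i) = c \<and> rec_args (nnth t i) = ncons c 0)"

definition Halt :: "nat set" where "Halt = {c. \<exists>f. enc f = c \<and> (\<exists>y. eval f [c] y)}"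

lemma Halt_iff: "(\<exists>t. halt_cert t c) \<longleftrightarrow> c \<in> Halt"
proof
  assume "\<exists>t. halt_cert t c"
  then obtain t i where t: "valid_cert_code t" "i < nlen t"
      "pfst (nnth t i) = 1" "rec_prog (nnth t i) = c" "rec_args (nnth t i) = ncons c 0"
    unfolding halt_cert_def by blast
  define L where "L = list_decode t"
  have tL: "t = list_encode L" by (simp add: L_def)
  have "valid_cert L" using t(1) valid_cert_code_enc tL by simp
  moreover have "nnth t i \<in> set L" using t(2) tL by simp
  ultimately have "sound (nnth t i)" by (rule valid_cert_sound)
  then show "c \<in> Halt" using t unfolding sound_def Halt_def by auto
next
  assume "c \<in> Halt"
  then obtain f y where f: "enc f = c" "eval f [c] y" unfolding Halt_def by blast
  obtain L where L: "valid_cert L" "has_eval (set L) (enc f) (list_encode [c]) y"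
    using eval_complete[OF f(2)] unfolding eval_certified_def by blast
  then obtain q where q: "q \<in> set L" "pfst q = 1" "rec_prog q = c" "rec_args q = ncons c 0"
    unfolding has_eval_def using f by auto
  then obtain i where i: "i < length L" "L ! i = q" by (metis in_set_conv_nth)
  have "halt_cert (list_encode L) c" unfolding halt_cert_def valid_cert_code_enc
    using L(1) q i by (intro conjI exI[of _ i]) auto
  then show "\<exists>t. halt_cert t c" by blast
qed

lemma bex_image_lt: "(\<exists>q\<in>f ` {..<i}. P q) = (\<exists>j<i. P (f j))" by auto
lemma mem_image_lt: "(x \<in> f ` {..<i}) = (\<exists>j<i. f j = x)" by auto

lemma recpred_halt_cert: "recpred 2 (\<lambda>e. halt_cert (e 0) (e 1))"
  unfolding halt_cert_def valid_cert_code_def justified_def code_just_def eval_just_def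
    has_code_def has_eval_def has_pos_eval_def has_step_eval_def
    rec_prog_def rec_args_def rec_res_def rec_aux_def bex_image_lt mem_image_lt
  by (intro recfn_intros | simp)+

lemma recpred_halt_cert_comp[recfn_intros]:
  "recfn n a \<Longrightarrow> recfn n b \<Longrightarrow> recpred n (\<lambda>e. halt_cert (a e) (b e))"
  using recfn_comp2[OF recpred_halt_cert[unfolded recpred_def]] unfolding recpred_def by blast

(* Unary constant programs, their codes, and the code of the program obtained from a
   three-argument program p by fixing the first two arguments to p and j (s-m-n). *)
primrec const1 :: "nat \<Rightarrow> recf" where
  "const1 0 = Z" | "const1 (Suc b) = Cn 1 S [const1 b]"

lemma eval_const1: "eval (const1 b) [x] b"
proof (induction b)
  case 0 then show ?case by (simp add: eval_Z)
next
  case (Suc b)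
  have "list_all2 (\<lambda>g y. eval g [x] y) [const1 b] [b]" using Suc by simp
  then show ?case by (auto intro: eval_Cn eval_S)
qed

(* The codes of the constant programs satisfy a primitive recursion, so they are computable. *)
definition const1_code_step :: "nat \<Rightarrow> nat" where
  "const1_code_step c = pair 3 (pair 1 (pair (pair 1 0) (ncons c 0)))"
definition const1_code :: "nat \<Rightarrow> nat" where "const1_code b = enc (const1 b)"

lemma const1_code_simps: "const1_code 0 = pair 0 0" "const1_code (Suc b) = const1_code_step (const1_code b)"
  by (simp_all add: const1_code_def const1_code_step_def)

(* Monotonicity of the codings, giving strict monotonicity of smn_code in j. *)
lemma triangle_less: "m < m' \<Longrightarrow> triangle m < triangle m'"
  by (rule lift_Suc_mono_less[of triangle]) auto
lemma triangle_le: "m \<le> m' \<Longrightarrow> triangle m \<le> triangle m'"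
  by (rule lift_Suc_mono_le[of triangle]) auto

lemma pair_mono2: "b < b' \<Longrightarrow> pair a b < pair a b'"
proof -
  assume "b < b'"
  then have "triangle (a + b) < triangle (a + b')" by (intro triangle_less) simp
  then show ?thesis by (simp add: pair_def prod_encode_def)
qed

lemma pair_ge2: "b \<le> pair a b" unfolding pair_def by (rule le_prod_encode_2)
lemma pair_ge1: "a \<le> pair a b" unfolding pair_def by (rule le_prod_encode_1)

lemma ncons_mono1: "a < a' \<Longrightarrow> ncons a c < ncons a' c"
proof -
  assume "a < a'"
  have "triangle (a + c) \<le> triangle (a' + c)" using \<open>a < a'\<close> by (intro triangle_le) simp
  then have "pair a c < pair a' c" using \<open>a < a'\<close> unfolding pair_def prod_encode_def
    by simp
  then show ?thesis by (simp add: ncons_def)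
qed
lemma ncons_mono2: "c < c' \<Longrightarrow> ncons a c < ncons a c'"
  by (simp add: ncons_def pair_mono2)

lemma const1_code_less: "const1_code b < const1_code (Suc b)"
proof -
  have "const1_code b < ncons (const1_code b) 0"
    using pair_ge1[of "const1_code b" 0] by (simp add: ncons_def)
  also have "\<dots> \<le> const1_code_step (const1_code b)" unfolding const1_code_step_def
    by (meson order_trans pair_ge2)
  finally show ?thesis by (simp add: const1_code_simps)
qed

lemma const1_code_mono: "strict_mono const1_code" using const1_code_less strict_mono_Suc_iff by blast

lemma recfn_const1_code1: "recfn 1 (\<lambda>e. const1_code (e 0))"
proof -
  have "recfn (Suc 0) (\<lambda>e. prim_rec (\<lambda>e. pair 0 0) (\<lambda>e. const1_code_step (e 1)) (e 0) (\<lambda>i. e (Suc i)))"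
    unfolding const1_code_step_def by (intro recfn_prim_rec recfn_intros | simp)+
  moreover have "prim_rec (\<lambda>e. pair 0 0) (\<lambda>e. const1_code_step (e 1)) x e = const1_code x" for x e
    by (induction x) (simp_all add: const1_code_simps)
  ultimately show ?thesis by (simp add: recfn_cong)
qed
lemma recfn_const1_code[recfn_intros]: "recfn n a \<Longrightarrow> recfn n (\<lambda>e. const1_code (a e))"
  by (rule recfn_comp1[OF recfn_const1_code1])

definition smn_code :: "nat \<Rightarrow> nat \<Rightarrow> nat" where
  "smn_code p j =
     pair 3 (pair 1 (pair p (ncons (const1_code p) (ncons (const1_code j) (ncons (pair 2 (pair 1 0)) 0)))))"

lemma enc_smn_code: "enc (Cn 1 P [const1 (enc P), const1 j, Id 1 0]) = smn_code (enc P) j"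
  by (simp add: smn_code_def const1_code_def)

lemma recfn_smn_code[recfn_intros]: "recfn n a \<Longrightarrow> recfn n b \<Longrightarrow> recfn n (\<lambda>e. smn_code (a e) (b e))"
  unfolding smn_code_def by (intro recfn_intros)

lemma smn_code_mono: "strict_mono (smn_code p)"
  unfolding strict_mono_def smn_code_def
  by (intro allI impI pair_mono2 ncons_mono2 ncons_mono1 strict_monoD[OF const1_code_mono])

lemma smn_code_ge: "j \<le> smn_code p j" using smn_code_mono strict_mono_imp_increasing by blast

lemma Mn_halt:
  assumes H: "\<forall>env. eval H (map env [0..<Suc n]) (h env)"
  shows "(\<exists>y. eval (Mn n H) (map env [0..<n]) y) \<longleftrightarrow> (\<exists>t. h (case_nat t env) = 0)"
proof -
  have mp: "map (case_nat t env) [0..<Suc n] = t # map env [0..<n]" for t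
    by (simp only: map_upt_Suc0 nat.case)
  have Ht: "eval H (t # map env [0..<n]) (h (case_nat t env))" for t
    using H mp by metis
  show ?thesis
  proof
    assume "\<exists>y. eval (Mn n H) (map env [0..<n]) y"
    then obtain y where "eval (Mn n H) (map env [0..<n]) y" by blast
    then have "eval H (y # map env [0..<n]) 0" by (rule evMnE)
    then have "h (case_nat y env) = 0" using Ht[of y] eval_det by metis
    then show "\<exists>t. h (case_nat t env) = 0" by blast
  next
    assume has_zero: "\<exists>t. h (case_nat t env) = 0"
    define y where "y = (LEAST t. h (case_nat t env) = 0)"
    have y0: "h (case_nat y env) = 0" unfolding y_def using has_zero by (rule LeastI_ex)
    have "\<forall>z<y. \<exists>v. eval H (z # map env [0..<n]) (Suc v)"
    proof (intro allI impI)
      fix z assume "z < y"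
      then have "h (case_nat z env) \<noteq> 0" unfolding y_def using not_less_Least by blast
      then obtain v where "h (case_nat z env) = Suc v" using not0_implies_Suc by blast
      then show "\<exists>v. eval H (z # map env [0..<n]) (Suc v)" using Ht[of z] by metis
    qed
    moreover have "eval H (y # map env [0..<n]) 0" using Ht[of y] y0 by simp
    ultimately have "eval (Mn n H) (map env [0..<n]) y" by (intro eval_Mn) auto
    then show "\<exists>y. eval (Mn n H) (map env [0..<n]) y" by blast
  qed
qed

(* K is infinite: it contains the codes of all constant programs. *)
lemma const1_code_Halt: "const1_code b \<in> Halt"
  unfolding Halt_def const1_code_def using eval_const1 by blast

lemma Halt_inf: "infinite Halt"
proof -
  have "inj const1_code" using const1_code_mono strict_mono_imp_inj_on by blast
  then have "infinite (range const1_code)" by (rule range_inj_infinite)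
  moreover have "range const1_code \<subseteq> Halt" using const1_code_Halt by blast
  ultimately show ?thesis using infinite_super by blast
qed

(* K is undecidable: from a decision procedure H one obtains the program D = Mn 1 H that
   halts on x iff x \<notin> K, and D diverges on its own code iff it halts on it. *)
lemma Halt_undecidable: "\<not> recpred 1 (\<lambda>e. e 0 \<in> Halt)"
proof
  assume "recpred 1 (\<lambda>e. e 0 \<in> Halt)"
  then have "recfn 2 (\<lambda>e. of_bool (e 1 \<in> Halt))"
    unfolding recpred_def using recfn_comp1[of "\<lambda>x. of_bool (x \<in> Halt)" 2 "\<lambda>e. e 1"] recfn_proj
    by simp
  then obtain H where "\<forall>env. eval H (map env [0..<2]) (of_bool (env 1 \<in> Halt))"
    unfolding recfn_def by blast
  then have H: "\<forall>env. eval H (map env [0..<Suc 1]) (of_bool (env 1 \<in> Halt))"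
    by (simp add: numeral_2_eq_2)
  define D where "D = Mn 1 H"
  have halt_D: "(\<exists>y. eval D [x] y) \<longleftrightarrow> x \<notin> Halt" for x
  proof -
    have "(\<exists>y. eval D (map (\<lambda>_. x) [0..<1]) y) \<longleftrightarrow>
        (\<exists>t. of_bool (case_nat t (\<lambda>_. x) 1 \<in> Halt) = (0::nat))"
      unfolding D_def by (rule Mn_halt[OF H])
    then show ?thesis by simp
  qed
  have "enc D \<in> Halt \<longleftrightarrow> (\<exists>y. eval D [enc D] y)" unfolding Halt_def using enc_inj by blast
  then show False using halt_D by blast
qed

(* As smn_code p j \<ge> j, the search for j is bounded by x; only the halting
   certificate t is found by unbounded search. *)
definition tail_test :: "(nat \<Rightarrow> nat) \<Rightarrow> nat" where
  "tail_test e = (if \<exists>j<Suc (e 3). e 2 < j \<and> e 3 = smn_code (e 1) j \<and> halt_cert (e 0) j then 0 else 1)"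

lemma recfn_tail_test: "recfn 4 tail_test"
proof -
  have "recfn 4 (\<lambda>e. if \<exists>j<Suc (e 3). e 2 < j \<and> e 3 = smn_code (e 1) j \<and> halt_cert (e 0) j then 0 else 1)"
    by (intro recfn_intros | simp)+
  then show ?thesis unfolding tail_test_def[abs_def] .
qed

definition tail_test_prog :: recf where
  "tail_test_prog = (SOME H. \<forall>env. eval H (map env [0..<4]) (tail_test env))"

lemma eval_tail_test_prog: "\<forall>env. eval tail_test_prog (map env [0..<Suc 3]) (tail_test env)"
  using someI_ex[OF recfn_tail_test[unfolded recfn_def]] unfolding tail_test_prog_def by simp

definition tail_search :: recf where "tail_search = Mn 3 tail_test_prog"

lemma halt_tail_search:
  "(\<exists>y. eval tail_search [p, k, x] y) \<longleftrightarrow> (\<exists>j<Suc x. k < j \<and> x = smn_code p j \<and> j \<in> Halt)"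
proof -
  define env where "env = (\<lambda>i::nat. [p, k, x] ! i)"
  have args: "map env [0..<3] = [p, k, x]" by (simp add: env_def numeral_3_eq_3)
  have "(\<exists>y. eval tail_search [p, k, x] y) \<longleftrightarrow> (\<exists>t. tail_test (case_nat t env) = 0)"
    using Mn_halt[OF eval_tail_test_prog, of env] unfolding tail_search_def args .
  also have "\<dots> \<longleftrightarrow> (\<exists>t. \<exists>j<Suc x. k < j \<and> x = smn_code p j \<and> halt_cert t j)"
    by (simp add: tail_test_def env_def numeral_3_eq_3 numeral_2_eq_2) blast
  also have "\<dots> \<longleftrightarrow> (\<exists>j<Suc x. k < j \<and> x = smn_code p j \<and> j \<in> Halt)"
    using Halt_iff by blast
  finally show ?thesis .
qed

(* Because the program receives its own code, the values x it accepts,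
   smn_code (enc tail_search) j, are exactly the indices tail_index j; so W (tail_index k)
   consists of the tail_index j for j \<in> K above k. *)
definition tail_index :: "nat \<Rightarrow> nat" where "tail_index k = smn_code (enc tail_search) k"
definition tail_prog :: "nat \<Rightarrow> recf" where
  "tail_prog k = Cn 1 tail_search [const1 (enc tail_search), const1 k, Id 1 0]"

lemma enc_tail_prog: "enc (tail_prog k) = tail_index k"
  unfolding tail_prog_def tail_index_def by (rule enc_smn_code)

lemma eval_tail_prog:
  "eval (tail_prog k) [x] y \<longleftrightarrow> eval tail_search [enc tail_search, k, x] y"
proof -
  have "eval (Id 1 0) [x] x" using eval_Id[of 0 1 "[x]"] by simp
  then have args: "list_all2 (\<lambda>g. eval g [x]) [const1 (enc tail_search), const1 k, Id 1 0] ys \<longleftrightarrow>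
      ys = [enc tail_search, k, x]" for ys
    using eval_const1 eval_det by (auto simp: list_all2_Cons1)
  show ?thesis
  proof
    assume "eval (tail_prog k) [x] y"
    then obtain ys where "list_all2 (\<lambda>g. eval g [x]) [const1 (enc tail_search), const1 k, Id 1 0] ys"
      "eval tail_search ys y"
      unfolding tail_prog_def by (rule evCnE)
    with args show "eval tail_search [enc tail_search, k, x] y" by simp
  next
    assume "eval tail_search [enc tail_search, k, x] y"
    with args show "eval (tail_prog k) [x] y"
      unfolding tail_prog_def by (intro eval_Cn[where ys = "[enc tail_search, k, x]"]) auto
  qed
qed

lemma psi_tail_index: "psi (tail_index k) x y \<longleftrightarrow> eval (tail_prog k) [x] y"
  unfolding psi_def using enc_tail_prog enc_inj by metis

lemma W_tail_index: "W (tail_index k) = tail_index ` {j \<in> Halt. k < j}"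
proof -
  have "x \<in> W (tail_index k) \<longleftrightarrow> (\<exists>y. eval tail_search [enc tail_search, k, x] y)" for x
    unfolding W_def using psi_tail_index eval_tail_prog by auto
  also have "\<dots> x \<longleftrightarrow> (\<exists>j<Suc x. k < j \<and> x = smn_code (enc tail_search) j \<and> j \<in> Halt)" for x
    by (rule halt_tail_search)
  also have "\<dots> x \<longleftrightarrow> (\<exists>j. j \<in> Halt \<and> k < j \<and> x = tail_index j)" for x
    unfolding tail_index_def using smn_code_ge less_Suc_eq_le by blast
  finally show ?thesis by blast
qed

lemma tail_index_mono: "strict_mono tail_index"
  unfolding tail_index_def using smn_code_mono by (simp add: strict_mono_def)

lemma recfn_tail_index: "recfn 1 (\<lambda>e. tail_index (e 0))"
  unfolding tail_index_def by (intro recfn_intros) simp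

lemma above_enumeration:
  fixes a :: "'a::linorder \<Rightarrow> 'b::linorder"
  assumes "strict_mono a"
  shows "{j \<in> range a. a n < j} = a ` {m. n < m}"
proof (intro set_eqI iffI)
  fix j assume "j \<in> {j \<in> range a. a n < j}"
  then obtain m where m: "j = a m" "a n < a m" by blast
  then have "n < m" using assms by (simp add: strict_mono_less)
  then show "j \<in> a ` {m. n < m}" using m(1) by blast
qed (use assms in \<open>auto simp: strict_mono_less\<close>)

(* If a strictly increasing enumeration a of K is composed with a strictly increasing
   computable g, the result is not computable: otherwise K would be decidable, since
   j \<in> K iff g j occurs among the values of g \<circ> a at arguments m \<le> g j. *)
lemma enumeration_noncomputable:
  assumes g: "strict_mono g" "recfn 1 (\<lambda>e. g (e 0))"
    and a: "strict_mono a" "range a = Halt"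
  shows "\<not> computable (\<lambda>n. g (a n))"
proof
  define f where "f n = g (a n)" for n
  assume "computable (\<lambda>n. g (a n))"
  then obtain F where "\<forall>n. eval F [n] (f n)" unfolding computable_def f_def by blast
  then have "recfn 1 (\<lambda>e. f (e 0))" unfolding recfn_def by (intro exI[of _ F]) simp
  then have f_comp: "recfn n b \<Longrightarrow> recfn n (\<lambda>e. f (b e))" for n b by (rule recfn_comp1)
  have g_comp: "recfn n b \<Longrightarrow> recfn n (\<lambda>e. g (b e))" for n b using g(2) by (rule recfn_comp1)
  have bounded: "j \<in> Halt \<longleftrightarrow> (\<exists>m<Suc (g j). f m = g j)" for j
  proof
    assume "j \<in> Halt"
    then obtain m where m: "j = a m" using a(2) by blast
    have "strict_mono f" using g(1) a(1) unfolding f_def by (simp add: strict_mono_def)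
    then have "m \<le> f m" by (rule strict_mono_imp_increasing)
    then show "\<exists>m<Suc (g j). f m = g j" using m unfolding f_def by (intro exI[of _ m]) simp
  next
    assume "\<exists>m<Suc (g j). f m = g j"
    then obtain m where "g (a m) = g j" unfolding f_def by blast
    then have "a m = j" using strict_mono_eq[OF g(1)] by blast
    then show "j \<in> Halt" using a(2) by blast
  qed
  have "recpred 1 (\<lambda>e. \<exists>m<Suc (g (e 0)). f m = g (e 0))"
    by (intro recfn_intros f_comp g_comp | simp)+
  then have "recpred 1 (\<lambda>e. e 0 \<in> Halt)"
    unfolding recpred_def by (rule recfn_cong) (simp add: bounded)
  then show False using Halt_undecidable by blast
qed

theorem mainTheorem5:
  shows "\<exists>e :: nat \<Rightarrow> nat. strict_mono e \<and> (\<forall>n. W (e n) = {e m | m. m > n}) \<and> \<not> computable e"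
proof -
  define a where "a = enumerate Halt"
  have a_mono: "strict_mono a" unfolding a_def using strict_mono_enumerate[OF Halt_inf] .
  have a_range: "range a = Halt" unfolding a_def using range_enumerate[OF Halt_inf] .
  define e where "e n = tail_index (a n)" for n
  have "strict_mono e"
    unfolding e_def using tail_index_mono a_mono by (simp add: strict_mono_def)
  moreover have "W (e n) = {e m | m. m > n}" for n
  proof -
    have "W (e n) = tail_index ` {j \<in> range a. a n < j}"
      unfolding e_def W_tail_index a_range ..
    also have "\<dots> = {e m | m. m > n}"
      unfolding above_enumeration[OF a_mono] e_def by blast
    finally show ?thesis .
  qed
  moreover have "\<not> computable e"
    unfolding e_def by (rule enumeration_noncomputable[OF tail_index_mono recfn_tail_index a_mono a_range])
  ultimately show ?thesis by blast
qed

end
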